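(* Let $n\ge 2$ be an integer and $A\subseteq L_n$. The following are equivalent: (i) $(X_n,\tau(A))$ is normal; (ii) the subset $L_n$ is $C^*$-embedded in $(X_n,\tau(A))$; (iii) the subset $L_n$ is $z$-embedded in $(X_n,\tau(A))$.
   Context: For $\overline{x},\overline{a}\in\mathbb R^n$ let $|\overline{x}-\overline{a}|$ be the Euclidean distance and $B(\overline{a},\epsilon)=\{\overline{x}\in\mathbb R^n:|\overline{x}-\overline{a}|<\epsilon\}$. Let $P_n=\{\overline{x}\in\mathbb R^n: x_n>0\}$, $L_n=\{\overline{x}\in\mathbb R^n: x_n=0\}$, $X_n=P_n\cup L_n$. For $\overline{a}\in L_n$ and $\epsilon>0$ put $\overline{a(\epsilon)}=(a_1,\dots,a_{n-1},\epsilon)$ and $\tilde B(\overline{a},\epsilon)=\{\overline{a}\}\cup B(\overline{a(\epsilon)},\epsilon)$. For $A\subseteq L_n$, the topology $\tau(A)$ on $X_n$ is generated by the local bases: at $\overline{a}\in P_n$, the sets $B(\overline{a},\epsilon)$ with $0<\epsilon<a_n$; at $\overline{a}\in A$, the sets $B(\overline{a},\epsilon)\cap X_n$ with $\epsilon>0$; at $\overline{a}\in L_n\setminus A$, the sets $\tilde B(\overline{a},\epsilon)$ with $\epsilon>0$. A subset $Y$ of a space $X$ is $C^*$-embedded in $X$ if every bounded continuous real function on $Y$ extends to a bounded continuous real function on $X$; $Y$ is $z$-embedded in $X$ if every zero set of $Y$ is the trace on $Y$ of some zero set of $X$. *)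

theory Defs
  imports "HOL-Analysis.Analysis"
begin

text \<open>We model R^n (n >= 2) as R^(n-1) x R, i.e. points are pairs (u, t) with
  u :: real^'m (the first n-1 coordinates, CARD('m) = n - 1 >= 1) and t the last
  coordinate.  The product metric on real^'m x real is the Euclidean one.\<close>

definition Xn :: "((real^'m) \<times> real) set" where
  "Xn = {p. snd p \<ge> 0}"

definition Ln :: "((real^'m) \<times> real) set" where
  "Ln = {p. snd p = 0}"

definition Pn :: "((real^'m) \<times> real) set" where
  "Pn = {p. snd p > 0}"

definition basic_nbhd :: "((real^'m) \<times> real) set \<Rightarrow> ((real^'m) \<times> real) \<Rightarrow> ((real^'m) \<times> real) set \<Rightarrow> bool" where
  "basic_nbhd A a N \<longleftrightarrow>
     (a \<in> Pn \<and> (\<exists>e. 0 < e \<and> e < snd a \<and> N = ball a e)) \<or>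
     (a \<in> A \<and> (\<exists>e>0. N = ball a e \<inter> Xn)) \<or>
     (a \<in> Ln - A \<and> (\<exists>e>0. N = insert a (ball (fst a, e) e)))"

definition tau :: "((real^'m) \<times> real) set \<Rightarrow> ((real^'m) \<times> real) topology" where
  "tau A = topology (\<lambda>U. U \<subseteq> Xn \<and> (\<forall>a\<in>U. \<exists>N. basic_nbhd A a N \<and> N \<subseteq> U))"

definition C_star_embedded :: "'a topology \<Rightarrow> 'a set \<Rightarrow> bool" where
  "C_star_embedded X Y \<longleftrightarrow>
     (\<forall>f. continuous_map (subtopology X Y) euclideanreal f \<and> bounded (f ` (topspace X \<inter> Y)) \<longrightarrow>
        (\<exists>g. continuous_map X euclideanreal g \<and> bounded (g ` topspace X) \<and>
             (\<forall>y \<in> topspace X \<inter> Y. g y = f y)))"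

definition zero_set :: "'a topology \<Rightarrow> ('a \<Rightarrow> real) \<Rightarrow> 'a set" where
  "zero_set X f = {x \<in> topspace X. f x = 0}"

definition is_zero_set :: "'a topology \<Rightarrow> 'a set \<Rightarrow> bool" where
  "is_zero_set X Z \<longleftrightarrow> (\<exists>f. continuous_map X euclideanreal f \<and> Z = zero_set X f)"

definition z_embedded :: "'a topology \<Rightarrow> 'a set \<Rightarrow> bool" where
  "z_embedded X Y \<longleftrightarrow>
     (\<forall>Z. is_zero_set (subtopology X Y) Z \<longrightarrow>
        (\<exists>Z'. is_zero_set X Z' \<and> Z = Z' \<inter> (topspace X \<inter> Y)))"

end

theory Submission
  imports Defs
begin

text \<open>Normality gives C*-embedding of the closed set Ln by Tietze's extension theorem, and
  C*-embedding gives z-embedding for any subspace by extending min |f| 1.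

  For the converse, Ln carries a simple subspace topology: points of Ln - A are isolated and points
  of A have their Euclidean neighbourhoods. So two disjoint closed sets H, K in Ln are separated by a
  function that is negative on H and positive on K (a difference of distance functions), and
  z-embedding extends its zero sets to X_n, giving disjoint open neighbourhoods U, V of H and K.
  Arbitrary disjoint closed sets F, G are then separated by unions of small tau-balls around their
  points: inside U and V at points on Ln, and with radius at most a quarter of the height at points
  of Pn. An elementary estimate shows that a tau-ball of radius r at a point of Ln stays at
  distance at least t/2 from any point at height t outside the tau-ball of radius 2r, so the
  two unions are disjoint.\<close>

lemma C_star_embedded_if_closedin_normal_space:
  assumes X: "normal_space X" and S: "closedin X S"
  shows "C_star_embedded X S"
  unfolding C_star_embedded_def
proof (intro allI impI, elim conjE)
  fix f assume f: "continuous_map (subtopology X S) euclideanreal f"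
    and "bounded (f ` (topspace X \<inter> S))"
  moreover have "topspace X \<inter> S = S"
    using closedin_subset[OF S] by blast
  ultimately obtain B where B: "\<forall>y\<in>f ` S. norm y \<le> B"
    unfolding bounded_iff by auto
  have "f ` S \<subseteq> {-\<bar>B\<bar>..\<bar>B\<bar>}"
  proof
    fix y assume "y \<in> f ` S"
    with B have "\<bar>y\<bar> \<le> B"
      by auto
    then show "y \<in> {-\<bar>B\<bar>..\<bar>B\<bar>}"
      by (auto simp: abs_le_iff)
  qed
  moreover have "-\<bar>B\<bar> \<le> \<bar>B\<bar>"
    by simp
  ultimately obtain g where "continuous_map X euclideanreal g" "\<And>x. x \<in> S \<Longrightarrow> g x = f x"
    "g ` topspace X \<subseteq> {-\<bar>B\<bar>..\<bar>B\<bar>}"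
    using Tietze_extension_closed_real_interval[OF X S f] by blast
  then show "\<exists>g. continuous_map X euclideanreal g \<and> bounded (g ` topspace X) \<and>
      (\<forall>y\<in>topspace X \<inter> S. g y = f y)"
    using bounded_subset[OF bounded_closed_interval] by blast
qed

lemma z_embedded_if_C_star_embedded:
  assumes "C_star_embedded X Y"
  shows "z_embedded X Y"
  unfolding z_embedded_def
proof (intro allI impI)
  fix Z assume "is_zero_set (subtopology X Y) Z"
  then obtain f where f: "continuous_map (subtopology X Y) euclideanreal f"
    and Z: "Z = zero_set (subtopology X Y) f"
    unfolding is_zero_set_def by blast
  define f' where "f' x = min \<bar>f x\<bar> 1" for x
  have "continuous_map (subtopology X Y) euclideanreal f'"
    unfolding f'_def by (intro continuous_intros f)
  moreover have "bounded (f' ` (topspace X \<inter> Y))"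
    by (rule bounded_subset[OF bounded_closed_interval[of 0 1]]) (auto simp: f'_def)
  ultimately obtain g where g: "continuous_map X euclideanreal g" "\<forall>y\<in>topspace X \<inter> Y. g y = f' y"
    using assms unfolding C_star_embedded_def by blast
  have "g y = 0 \<longleftrightarrow> f y = 0" if "y \<in> topspace X \<inter> Y" for y
  proof -
    have "g y = min \<bar>f y\<bar> 1"
      using g(2) that by (simp add: f'_def)
    then show ?thesis
      by (cases "\<bar>f y\<bar> \<le> 1") auto
  qed
  then have "Z = zero_set X g \<inter> (topspace X \<inter> Y)"
    unfolding Z zero_set_def by auto
  moreover have "is_zero_set X (zero_set X g)"
    using g(1) unfolding is_zero_set_def by blast
  ultimately show "\<exists>Z'. is_zero_set X Z' \<and> Z = Z' \<inter> (topspace X \<inter> Y)"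
    by blast
qed

lemma z_embedded_zero_set_extension:
  assumes "z_embedded X Y" and "continuous_map (subtopology X Y) euclideanreal f"
  shows "\<exists>h. continuous_map X euclideanreal h \<and> (\<forall>y\<in>topspace X \<inter> Y. h y = 0 \<longleftrightarrow> f y = 0)"
proof -
  obtain Z where "is_zero_set X Z" "zero_set (subtopology X Y) f = Z \<inter> (topspace X \<inter> Y)"
    using assms unfolding z_embedded_def is_zero_set_def by blast
  then obtain h where h: "continuous_map X euclideanreal h"
    "zero_set (subtopology X Y) f = zero_set X h \<inter> (topspace X \<inter> Y)"
    unfolding is_zero_set_def by blast
  have "h y = 0 \<longleftrightarrow> f y = 0" if "y \<in> topspace X \<inter> Y" for y
    using arg_cong[where f = "\<lambda>S. y \<in> S", OF h(2)] that by (simp add: zero_set_def)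
  with h(1) show ?thesis
    by blast
qed

text \<open>On Y, the extension h1 vanishes on H but not on K and h2 vanishes on K but not on H,
  so the open sets where |h1| < |h2| and where |h1| > |h2| separate H and K.\<close>
lemma z_embedded_separation:
  assumes z: "z_embedded X Y" and g: "continuous_map (subtopology X Y) euclideanreal g"
    and H: "H \<subseteq> topspace X \<inter> Y" "\<And>p. p \<in> H \<Longrightarrow> g p < 0"
    and K: "K \<subseteq> topspace X \<inter> Y" "\<And>p. p \<in> K \<Longrightarrow> 0 < g p"
  obtains U V where "openin X U" "openin X V" "H \<subseteq> U" "K \<subseteq> V" "disjnt U V"
proof -
  have "continuous_map (subtopology X Y) euclideanreal (\<lambda>y. max (g y) 0)"
    by (intro continuous_intros g)
  then obtain h1 where h1: "continuous_map X euclideanreal h1"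
      "\<forall>y\<in>topspace X \<inter> Y. h1 y = 0 \<longleftrightarrow> max (g y) 0 = 0"
    using z_embedded_zero_set_extension[OF z] by blast
  have "continuous_map (subtopology X Y) euclideanreal (\<lambda>y. max (- g y) 0)"
    by (intro continuous_intros g)
  then obtain h2 where h2: "continuous_map X euclideanreal h2"
      "\<forall>y\<in>topspace X \<inter> Y. h2 y = 0 \<longleftrightarrow> max (- g y) 0 = 0"
    using z_embedded_zero_set_extension[OF z] by blast
  have zeros: "h1 p = 0 \<longleftrightarrow> g p \<le> 0" "h2 p = 0 \<longleftrightarrow> 0 \<le> g p" if "p \<in> topspace X \<inter> Y" for p
  proof -
    have "h1 p = 0 \<longleftrightarrow> max (g p) 0 = 0" "h2 p = 0 \<longleftrightarrow> max (- g p) 0 = 0"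
      using h1(2) h2(2) that by blast+
    then show "h1 p = 0 \<longleftrightarrow> g p \<le> 0" "h2 p = 0 \<longleftrightarrow> 0 \<le> g p"
      by (auto simp: max_def)
  qed
  have h: "continuous_map X euclideanreal (\<lambda>x. \<bar>h1 x\<bar> - \<bar>h2 x\<bar>)"
    by (intro continuous_intros h1(1) h2(1))
  define U where "U = {x \<in> topspace X. \<bar>h1 x\<bar> - \<bar>h2 x\<bar> \<in> {..<0}}"
  define V where "V = {x \<in> topspace X. \<bar>h1 x\<bar> - \<bar>h2 x\<bar> \<in> {0<..}}"
  have "openin X U"
    unfolding U_def by (rule openin_continuous_map_preimage[OF h]) simp
  moreover have "openin X V"
    unfolding V_def by (rule openin_continuous_map_preimage[OF h]) simp
  moreover have "H \<subseteq> U"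
  proof
    fix p assume "p \<in> H"
    then have p: "p \<in> topspace X \<inter> Y" "g p < 0"
      using H by auto
    then have "h1 p = 0" "h2 p \<noteq> 0"
      using zeros[OF p(1)] by auto
    then show "p \<in> U"
      using p(1) by (simp add: U_def)
  qed
  moreover have "K \<subseteq> V"
  proof
    fix p assume "p \<in> K"
    then have p: "p \<in> topspace X \<inter> Y" "0 < g p"
      using K by auto
    then have "h2 p = 0" "h1 p \<noteq> 0"
      using zeros[OF p(1)] by auto
    then show "p \<in> V"
      using p(1) by (simp add: V_def)
  qed
  moreover have "disjnt U V"
    by (auto simp: U_def V_def disjnt_def)
  ultimately show ?thesis
    using that by blast
qed

lemma tangent_ball_mono:
  fixes u :: "'a::metric_space"
  assumes "0 < e" "e \<le> e'"
  shows "ball (u, e) e \<subseteq> ball (u, e') e'"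
proof
  fix z assume "z \<in> ball (u, e) e"
  moreover have "dist (u, e') (u, e) = e' - e"
    using assms by (simp add: dist_Pair_Pair dist_real_def)
  ultimately show "z \<in> ball (u, e') e'"
    using dist_triangle[of "(u, e')" z "(u, e)"] by simp
qed

lemma tangent_ball_subset_ball:
  fixes b :: "'a::metric_space \<times> real"
  assumes "snd b = 0"
  shows "ball (fst b, e) e \<subseteq> ball b (2 * e)"
proof
  fix z assume "z \<in> ball (fst b, e) e"
  moreover have "dist b (fst b, e) = \<bar>e\<bar>"
    using assms by (cases b) (simp add: dist_Pair_Pair dist_real_def)
  moreover have "0 < e"
    using calculation(1) by (simp add: le_less_trans[OF zero_le_dist])
  ultimately show "z \<in> ball b (2 * e)"
    using dist_triangle[of b z "(fst b, e)"] by simp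
qed

lemma snd_diff_le_dist:
  fixes x y :: "'a::metric_space \<times> real"
  shows "snd x - snd y \<le> dist x y"
  using dist_snd_le[of x y] by (simp add: dist_real_def)

lemma half_snd_le_dist_ball:
  fixes q x y :: "'a::metric_space \<times> real"
  assumes "snd q = 0" "x \<notin> ball q (2 * r)" "y \<in> ball q r"
  shows "snd x / 2 \<le> dist x y"
proof -
  have "2 * r \<le> dist q x" and "dist q y < r"
    using assms(2,3) by auto
  then have "r \<le> dist x y"
    using dist_triangle[of q x y] by (simp add: dist_commute)
  moreover have "snd y < r"
    using snd_diff_le_dist[of y q] \<open>dist q y < r\<close> assms(1) by (simp add: dist_commute)
  ultimately show ?thesis
    using snd_diff_le_dist[of x y] by linarith
qed

text \<open>A point of height t outside the tangent ball of radius 2r has horizontal offset a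
  with a^2 \<ge> 4rt - t^2, so its distance from the centre of the tangent ball of radius r is
  at least sqrt (r^2 + 2rt) \<ge> r + t/2 as long as t \<le> 4r.\<close>
lemma half_snd_le_dist_tangent_ball:
  fixes u :: "'a::metric_space" and x y :: "'a \<times> real"
  assumes r: "0 < r" and x: "x \<notin> ball (u, 2 * r) (2 * r)" and y: "y \<in> ball (u, r) r"
  shows "snd x / 2 \<le> dist x y"
proof -
  define a t where "a = dist u (fst x)" and "t = snd x"
  have x_eq: "x = (fst x, t)"
    by (simp add: t_def)
  have "snd y < 2 * r"
    using snd_diff_le_dist[of y "(u, r)"] y by (simp add: dist_commute)
  then have far_up: "t - 2 * r \<le> dist x y"
    using snd_diff_le_dist[of x y] by (simp add: t_def)
  have "dist (u, r) x = sqrt (a\<^sup>2 + (r - t)\<^sup>2)"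
    by (subst x_eq) (simp add: dist_Pair_Pair a_def dist_real_def)
  then have near: "sqrt (a\<^sup>2 + (r - t)\<^sup>2) - r \<le> dist x y"
    using dist_triangle[of "(u, r)" x y] y by (simp add: dist_commute)
  show ?thesis
  proof (cases "0 < t \<and> t \<le> 4 * r")
    case True
    have "2 * r \<le> sqrt (a\<^sup>2 + (2 * r - t)\<^sup>2)"
      using x by (subst (asm) x_eq) (simp add: dist_Pair_Pair a_def dist_real_def)
    then have "(2 * r)\<^sup>2 \<le> a\<^sup>2 + (2 * r - t)\<^sup>2"
      using r by (intro sqrt_ge_absD) simp
    moreover have "0 \<le> t * (4 * r - t)"
      using True by simp
    ultimately have "(r + t / 2)\<^sup>2 \<le> a\<^sup>2 + (r - t)\<^sup>2"
      by (simp add: power2_eq_square algebra_simps)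
    then have "r + t / 2 \<le> sqrt (a\<^sup>2 + (r - t)\<^sup>2)"
      by (rule real_le_rsqrt)
    then show ?thesis
      using near by (simp add: t_def)
  next
    case False
    then show ?thesis
      using far_up zero_le_dist[of x y] unfolding t_def by linarith
  qed
qed

lemma Xn_eq_Pn_Un_Ln: "Xn = Pn \<union> Ln"
  and Pn_Int_Ln: "Pn \<inter> Ln = {}"
  and Ln_subset_Xn: "Ln \<subseteq> Xn"
  by (auto simp: Xn_def Pn_def Ln_def)

lemma ball_subset_Xn:
  assumes "e \<le> snd x"
  shows "ball x e \<subseteq> Xn"
proof
  fix z assume "z \<in> ball x e"
  then show "z \<in> Xn"
    using snd_diff_le_dist[of x z] assms by (simp add: Xn_def)
qed

lemma tangent_ball_subset_Pn: "ball (u, e) e \<subseteq> Pn"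
proof
  fix z assume "z \<in> ball (u, e) e"
  then show "z \<in> Pn"
    using snd_diff_le_dist[of "(u, e)" z] by (simp add: Pn_def)
qed

lemma tangent_ball_subset_Xn: "ball (u, e) e \<subseteq> Xn"
  using tangent_ball_subset_Pn Xn_eq_Pn_Un_Ln by blast

text \<open>The three kinds of basic neighbourhoods of tau(A) as one family indexed by the radius;
  at points of Pn only the radii e < snd x give basic neighbourhoods.\<close>
definition tau_ball :: "((real^'m) \<times> real) set \<Rightarrow> (real^'m) \<times> real \<Rightarrow> real \<Rightarrow> ((real^'m) \<times> real) set"
  where "tau_ball A x e =
    (if x \<in> Pn then ball x e else if x \<in> A then ball x e \<inter> Xn else insert x (ball (fst x, e) e))"

lemma centre_in_tau_ball: "x \<in> Xn \<Longrightarrow> 0 < e \<Longrightarrow> x \<in> tau_ball A x e"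
  by (simp add: tau_ball_def)

lemma tau_ball_mono:
  assumes "0 < e" "e \<le> e'"
  shows "tau_ball A x e \<subseteq> tau_ball A x e'"
proof -
  have "ball x e \<subseteq> ball x e'" "ball (fst x, e) e \<subseteq> ball (fst x, e') e'"
    using assms by (simp_all add: subset_ball tangent_ball_mono)
  then show ?thesis
    unfolding tau_ball_def by (simp; blast)
qed

lemma basic_nbhd_iff_tau_ball:
  assumes "A \<subseteq> Ln"
  shows "basic_nbhd A x N \<longleftrightarrow> x \<in> Xn \<and> (\<exists>e>0. (x \<in> Pn \<longrightarrow> e < snd x) \<and> N = tau_ball A x e)"
proof -
  consider "x \<in> Pn" "x \<notin> A" "x \<notin> Ln" "x \<in> Xn" | "x \<in> A" "x \<notin> Pn" "x \<in> Xn"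
    | "x \<in> Ln" "x \<notin> A" "x \<notin> Pn" "x \<in> Xn" | "x \<notin> Pn" "x \<notin> A" "x \<notin> Ln" "x \<notin> Xn"
    using assms by (auto simp: Xn_def Pn_def Ln_def)
  then show ?thesis
    by cases (simp_all add: basic_nbhd_def tau_ball_def)
qed

lemma openin_tau_iff:
  assumes "A \<subseteq> Ln"
  shows "openin (tau A) U \<longleftrightarrow>
    U \<subseteq> Xn \<and> (\<forall>x\<in>U. \<exists>e>0. (x \<in> Pn \<longrightarrow> e < snd x) \<and> tau_ball A x e \<subseteq> U)"
proof -
  let ?open = "\<lambda>U. U \<subseteq> Xn \<and> (\<forall>x\<in>U. \<exists>e>0. (x \<in> Pn \<longrightarrow> e < snd x) \<and> tau_ball A x e \<subseteq> U)"
  have tau_eq: "tau A = topology ?open"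
    unfolding tau_def basic_nbhd_iff_tau_ball[OF assms] by (intro arg_cong[where f = topology] ext) blast
  have "istopology ?open"
    unfolding istopology_def
  proof (rule conjI; intro allI impI)
    fix S T assume S: "?open S" and T: "?open T"
    show "?open (S \<inter> T)"
    proof (intro conjI ballI)
      fix x assume "x \<in> S \<inter> T"
      then obtain e e' where "0 < e" "x \<in> Pn \<longrightarrow> e < snd x" "tau_ball A x e \<subseteq> S"
        and "0 < e'" "x \<in> Pn \<longrightarrow> e' < snd x" "tau_ball A x e' \<subseteq> T"
        using S T by blast
      then show "\<exists>d>0. (x \<in> Pn \<longrightarrow> d < snd x) \<and> tau_ball A x d \<subseteq> S \<inter> T"
        using tau_ball_mono[of "min e e'" e A x] tau_ball_mono[of "min e e'" e' A x]
        by (intro exI[of _ "min e e'"]) auto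
    qed (use S in blast)
  next
    fix K assume "\<forall>U\<in>K. ?open U"
    then show "?open (\<Union>K)"
      by (meson Union_iff Union_least Union_upper order_trans)
  qed
  then show ?thesis
    by (simp add: tau_eq)
qed

lemma openin_tau_if_openin_Xn:
  assumes A: "A \<subseteq> Ln" and S: "openin (top_of_set Xn) S"
  shows "openin (tau A) S"
  unfolding openin_tau_iff[OF A]
proof (intro conjI ballI)
  show S_Xn: "S \<subseteq> Xn"
    using S by (simp add: openin_contains_ball)
  fix x assume "x \<in> S"
  then have x: "x \<in> Xn"
    using S_Xn by blast
  obtain e where e: "0 < e" "ball x e \<inter> Xn \<subseteq> S"
    using S \<open>x \<in> S\<close> unfolding openin_contains_ball by blast
  show "\<exists>d>0. (x \<in> Pn \<longrightarrow> d < snd x) \<and> tau_ball A x d \<subseteq> S"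
  proof (cases "x \<in> Pn")
    case True
    define d where "d = min e (snd x) / 2"
    have d: "0 < d" "d < snd x" "d \<le> e"
      using True e by (auto simp: d_def Pn_def)
    have "tau_ball A x d = ball x d"
      using True by (simp add: tau_ball_def)
    also have "\<dots> \<subseteq> ball x e \<inter> Xn"
      using d ball_subset_Xn[of d x] subset_ball[of d e x] by simp
    finally show ?thesis
      using d e by blast
  next
    case False
    then have "snd x = 0"
      using x by (simp add: Xn_def Pn_def)
    have "tau_ball A x (e / 2) \<subseteq> ball x e \<inter> Xn"
    proof (cases "x \<in> A")
      case True
      then show ?thesis
        using False e(1) by (auto simp: tau_ball_def)
    next
      case False
      have "ball (fst x, e / 2) (e / 2) \<subseteq> ball x e \<inter> Xn"
        using tangent_ball_subset_ball[OF \<open>snd x = 0\<close>, of "e / 2"] tangent_ball_subset_Xn by auto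
      then show ?thesis
        using False \<open>x \<notin> Pn\<close> x e(1) by (simp add: tau_ball_def)
    qed
    then show ?thesis
      using e False by (intro exI[of _ "e / 2"]) auto
  qed
qed

lemma topspace_tau:
  assumes "A \<subseteq> Ln"
  shows "topspace (tau A) = Xn"
proof
  show "topspace (tau A) \<subseteq> Xn"
    using openin_topspace[of "tau A"] unfolding openin_tau_iff[OF assms] by (rule conjunct1)
  have "openin (tau A) Xn"
    using assms openin_subtopology_self by (rule openin_tau_if_openin_Xn)
  then show "Xn \<subseteq> topspace (tau A)"
    by (rule openin_subset)
qed

lemma openin_tau_ball:
  assumes A: "A \<subseteq> Ln" and x: "x \<in> Xn" and e: "0 < e" "x \<in> Pn \<longrightarrow> e \<le> snd x"
  shows "openin (tau A) (tau_ball A x e)"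
proof -
  consider "x \<in> Pn" | "x \<notin> Pn" "x \<in> A" | "x \<notin> Pn" "x \<notin> A"
    by blast
  then show ?thesis
  proof cases
    case 1
    then have "openin (top_of_set Xn) (tau_ball A x e)"
      using e ball_subset_Xn[of e x] by (simp add: tau_ball_def open_subset)
    then show ?thesis
      by (rule openin_tau_if_openin_Xn[OF A])
  next
    case 2
    then have "openin (top_of_set Xn) (tau_ball A x e)"
      using openin_open_Int[of "ball x e" Xn] by (simp add: tau_ball_def Int_commute)
    then show ?thesis
      by (rule openin_tau_if_openin_Xn[OF A])
  next
    case 3
    then have ball_eq: "tau_ball A x e = insert x (ball (fst x, e) e)"
      by (simp add: tau_ball_def)
    have tangent_open: "openin (tau A) (ball (fst x, e) e)"
      using tangent_ball_subset_Xn by (intro openin_tau_if_openin_Xn[OF A] open_subset) auto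
    show ?thesis
      unfolding openin_tau_iff[OF A]
    proof (intro conjI ballI)
      show "tau_ball A x e \<subseteq> Xn"
        using x tangent_ball_subset_Xn by (simp add: ball_eq)
      fix y assume "y \<in> tau_ball A x e"
      then consider "y = x" | "y \<in> ball (fst x, e) e"
        by (auto simp: ball_eq)
      then show "\<exists>d>0. (y \<in> Pn \<longrightarrow> d < snd y) \<and> tau_ball A y d \<subseteq> tau_ball A x e"
      proof cases
        case 1
        then show ?thesis
          using 3 e by blast
      next
        case 2
        then obtain d where "0 < d" "y \<in> Pn \<longrightarrow> d < snd y" "tau_ball A y d \<subseteq> ball (fst x, e) e"
          using tangent_open unfolding openin_tau_iff[OF A] by blast
        then show ?thesis
          unfolding ball_eq by blast
      qed
    qed
  qed
qed

lemma closedin_tau_Ln: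
  assumes A: "A \<subseteq> Ln"
  shows "closedin (tau A) Ln"
proof -
  have "open Pn"
    unfolding Pn_def by (intro open_Collect_less continuous_intros)
  then have "openin (tau A) Pn"
    using Xn_eq_Pn_Un_Ln by (intro openin_tau_if_openin_Xn[OF A] open_subset) auto
  moreover have "topspace (tau A) - Ln = Pn"
    unfolding topspace_tau[OF A] by (auto simp: Xn_def Ln_def Pn_def)
  ultimately show ?thesis
    unfolding closedin_def using topspace_tau[OF A] Ln_subset_Xn by simp
qed

lemma continuous_map_subtopology_tau_Ln:
  assumes A: "A \<subseteq> Ln" and g: "\<And>p. p \<in> A \<Longrightarrow> continuous (at p within Ln) g"
  shows "continuous_map (subtopology (tau A) Ln) euclideanreal g"
  unfolding continuous_map_eq_topcontinuous_at topcontinuous_at_def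
proof (intro ballI conjI allI impI)
  fix p assume p_top: "p \<in> topspace (subtopology (tau A) Ln)"
  then show "p \<in> topspace (subtopology (tau A) Ln)" .
  have p: "p \<in> Ln"
    using p_top by simp
  fix V assume V: "openin euclideanreal V \<and> g p \<in> V"
  show "\<exists>U. openin (subtopology (tau A) Ln) U \<and> p \<in> U \<and> (\<forall>y\<in>U. g y \<in> V)"
  proof (cases "p \<in> A")
    case True
    obtain \<epsilon> where "0 < \<epsilon>" "ball (g p) \<epsilon> \<subseteq> V"
      using V open_contains_ball_eq by force
    moreover obtain \<delta> where "0 < \<delta>" "g ` (ball p \<delta> \<inter> Ln) \<subseteq> ball (g p) \<epsilon>"
      using g[OF True] \<open>0 < \<epsilon>\<close> unfolding continuous_within_ball by blast
    moreover have "openin (subtopology (tau A) Ln) (Ln \<inter> (Xn \<inter> ball p \<delta>))"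
      by (intro openin_subtopology_Int2 openin_tau_if_openin_Xn[OF A] openin_open_Int) simp
    ultimately show ?thesis
      using p Ln_subset_Xn by (intro exI[of _ "Ln \<inter> (Xn \<inter> ball p \<delta>)"]) auto
  next
    case False
    have "Ln \<inter> tau_ball A p 1 = {p}"
      using False p Pn_Int_Ln tangent_ball_subset_Pn by (auto simp: tau_ball_def)
    moreover have "openin (subtopology (tau A) Ln) (Ln \<inter> tau_ball A p 1)"
      using p Ln_subset_Xn Pn_Int_Ln by (intro openin_subtopology_Int2 openin_tau_ball[OF A]) auto
    ultimately show ?thesis
      using V by (intro exI[of _ "{p}"]) auto
  qed
qed simp

lemma infdist_pos_if_closedin_tau:
  assumes A: "A \<subseteq> Ln" and H: "closedin (tau A) H" "H \<noteq> {}" and p: "p \<in> A" "p \<notin> H"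
  shows "0 < infdist p H"
proof -
  have p_Xn: "p \<in> Xn" and p_Pn: "p \<notin> Pn"
    using A p Ln_subset_Xn Pn_Int_Ln by auto
  have "openin (tau A) (Xn - H)"
    using H topspace_tau[OF A] by (simp add: closedin_def)
  then obtain e where e: "0 < e" "tau_ball A p e \<subseteq> Xn - H"
    using p_Xn p by (force simp: openin_tau_iff[OF A])
  have "e \<le> dist p h" if "h \<in> H" for h
    using e that p p_Pn closedin_subset[OF H(1)] topspace_tau[OF A]
    by (force simp: tau_ball_def not_less)
  then have "e \<le> infdist p H"
    unfolding infdist_notempty[OF H(2)] by (intro cINF_greatest H(2))
  with e show ?thesis
    by simp
qed

lemma sign_separating_function_Ln:
  assumes A: "A \<subseteq> Ln" and H: "closedin (tau A) H" and K: "closedin (tau A) K" and "H \<inter> K = {}"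
  obtains g where "continuous_map (subtopology (tau A) Ln) euclideanreal g"
    "\<And>p. p \<in> H \<Longrightarrow> g p < 0" "\<And>p. p \<in> K \<Longrightarrow> 0 < g p"
proof (cases "H = {} \<or> K = {}")
  case True
  show ?thesis
  proof (cases "H = {}")
    case True
    then show ?thesis
      using that[of "\<lambda>_. 1"] by simp
  next
    case False
    then show ?thesis
      using that[of "\<lambda>_. -1"] \<open>H = {} \<or> K = {}\<close> by simp
  qed
next
  case False
  define f where "f q = infdist q H - infdist q K" for q
  define s where "s q = infdist q H + infdist q K" for q
  \<comment> \<open>Both distances vanish only at points of Ln - A, which are isolated in Ln.\<close>
  define g where "g q = (if 0 < s q then f q else if q \<in> H then -1 else 1)" for q
  have "continuous (at p within Ln) g" if p: "p \<in> A" for p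
  proof -
    have "0 < s p"
      using infdist_pos_if_closedin_tau[OF A H, of p] infdist_pos_if_closedin_tau[OF A K, of p]
        False p \<open>H \<inter> K = {}\<close> infdist_nonneg[of p H] infdist_nonneg[of p K]
      by (fastforce simp: s_def)
    moreover have "(s \<longlongrightarrow> s p) (at p within Ln)" "(f \<longlongrightarrow> f p) (at p within Ln)"
      unfolding s_def f_def by (intro tendsto_intros)+
    ultimately have "\<forall>\<^sub>F q in at p within Ln. f q = g q"
      by (auto elim!: eventually_mono dest: order_tendstoD(1) simp: g_def)
    then have "(g \<longlongrightarrow> f p) (at p within Ln)"
      using \<open>(f \<longlongrightarrow> f p) (at p within Ln)\<close> by (rule Lim_transform_eventually[rotated])
    then show ?thesis
      using \<open>0 < s p\<close> by (simp add: continuous_within g_def)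
  qed
  moreover have "g p < 0" if "p \<in> H" for p
    using that infdist_nonneg[of p K] by (auto simp: g_def f_def s_def)
  moreover have "0 < g p" if "p \<in> K" for p
    using that \<open>H \<inter> K = {}\<close> infdist_nonneg[of p H] by (auto simp: g_def f_def s_def)
  ultimately show ?thesis
    using that continuous_map_subtopology_tau_Ln[OF A] by blast
qed

lemma half_snd_le_dist_tau_ball:
  assumes q: "q \<in> Ln" and r: "0 < r" and x: "x \<in> Pn" "x \<notin> tau_ball A q (2 * r)"
    and y: "y \<in> tau_ball A q r"
  shows "snd x / 2 \<le> dist x y"
proof -
  have q_snd: "snd q = 0" "q \<notin> Pn"
    using q Pn_Int_Ln by (auto simp: Ln_def)
  have x_snd: "0 < snd x" "x \<in> Xn"
    using x Xn_eq_Pn_Un_Ln by (auto simp: Pn_def)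
  show ?thesis
  proof (cases "q \<in> A")
    case True
    then have "x \<notin> ball q (2 * r)" "y \<in> ball q r"
      using q_snd x_snd x y by (auto simp: tau_ball_def)
    then show ?thesis
      by (rule half_snd_le_dist_ball[OF q_snd(1)])
  next
    case False
    then have "x \<notin> ball (fst q, 2 * r) (2 * r)" and y_cases: "y = q \<or> y \<in> ball (fst q, r) r"
      using q_snd x y by (auto simp: tau_ball_def)
    then show ?thesis
    proof (elim disjE)
      assume "y = q"
      then show ?thesis
        using snd_diff_le_dist[of x y] q_snd x_snd by simp
    qed (use r half_snd_le_dist_tangent_ball in blast)
  qed
qed

text \<open>The factor 2 leaves room for the triangle inequality; the bound by a quarter of the height
  keeps the tau-balls at points of F in Pn away from those at points of G on Ln
  (half_snd_le_dist_tau_ball).\<close>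
definition separating_radius ::
    "((real^'m) \<times> real) set \<Rightarrow> ((real^'m) \<times> real) set \<Rightarrow> ((real^'m) \<times> real) set \<Rightarrow>
      ((real^'m) \<times> real) set \<Rightarrow> ((real^'m) \<times> real \<Rightarrow> real) \<Rightarrow> bool"
  where "separating_radius A F G U r \<longleftrightarrow>
    (\<forall>x\<in>F. 0 < r x \<and> tau_ball A x (2 * r x) \<inter> G = {} \<and>
      (x \<in> Ln \<longrightarrow> tau_ball A x (2 * r x) \<subseteq> U) \<and> (x \<in> Pn \<longrightarrow> 4 * r x \<le> snd x))"

lemma separating_radiusD:
  assumes "separating_radius A F G U r" and "x \<in> F"
  shows "0 < r x" "tau_ball A x (2 * r x) \<inter> G = {}"
    "x \<in> Ln \<Longrightarrow> tau_ball A x (2 * r x) \<subseteq> U" "x \<in> Pn \<Longrightarrow> 4 * r x \<le> snd x"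
  using assms unfolding separating_radius_def by blast+

lemma separating_radius_exists:
  assumes A: "A \<subseteq> Ln" and G: "closedin (tau A) G" and U: "openin (tau A) U"
    and F: "F \<subseteq> Xn" "F \<inter> Ln \<subseteq> U" "F \<inter> G = {}"
  obtains r where "separating_radius A F G U r"
proof -
  have "\<forall>x\<in>F. \<exists>\<rho>. 0 < \<rho> \<and> tau_ball A x (2 * \<rho>) \<inter> G = {} \<and>
      (x \<in> Ln \<longrightarrow> tau_ball A x (2 * \<rho>) \<subseteq> U) \<and> (x \<in> Pn \<longrightarrow> 4 * \<rho> \<le> snd x)"
  proof
    fix x assume x: "x \<in> F"
    define W where "W = (if x \<in> Ln then U else topspace (tau A)) - G"
    have "openin (tau A) W"
      using G U by (simp add: W_def openin_diff)
    moreover have "x \<in> W"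
      using x F topspace_tau[OF A] by (auto simp: W_def)
    ultimately obtain e where e: "0 < e" "x \<in> Pn \<longrightarrow> e < snd x" "tau_ball A x e \<subseteq> W"
      unfolding openin_tau_iff[OF A] by blast
    moreover have "tau_ball A x (2 * (e / 4)) \<subseteq> tau_ball A x e"
      using e(1) by (intro tau_ball_mono) auto
    ultimately have "tau_ball A x (2 * (e / 4)) \<subseteq> W"
      by blast
    then have "tau_ball A x (2 * (e / 4)) \<inter> G = {}" "x \<in> Ln \<longrightarrow> tau_ball A x (2 * (e / 4)) \<subseteq> U"
      by (auto simp: W_def)
    then show "\<exists>\<rho>. 0 < \<rho> \<and> tau_ball A x (2 * \<rho>) \<inter> G = {} \<and>
        (x \<in> Ln \<longrightarrow> tau_ball A x (2 * \<rho>) \<subseteq> U) \<and> (x \<in> Pn \<longrightarrow> 4 * \<rho> \<le> snd x)"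
      using e(1,2) by (intro exI[of _ "e / 4"]) auto
  qed
  from bchoice[OF this] show ?thesis
    using that unfolding separating_radius_def by blast
qed

lemma openin_tau_ball_Union:
  assumes A: "A \<subseteq> Ln" and F: "F \<subseteq> Xn" and r: "separating_radius A F G U r"
  shows "openin (tau A) (\<Union>x\<in>F. tau_ball A x (r x))"
proof -
  have "openin (tau A) (tau_ball A x (r x))" if "x \<in> F" for x
    using F that separating_radiusD[OF r that] by (intro openin_tau_ball[OF A]) auto
  then show ?thesis
    by (intro openin_Union) auto
qed

lemma tau_ball_Union_cover:
  assumes "F \<subseteq> Xn" and "separating_radius A F G U r"
  shows "F \<subseteq> (\<Union>x\<in>F. tau_ball A x (r x))"
proof
  fix x assume "x \<in> F"
  then have "x \<in> tau_ball A x (r x)"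
    using assms by (intro centre_in_tau_ball separating_radiusD(1)[OF assms(2)]) auto
  with \<open>x \<in> F\<close> show "x \<in> (\<Union>x\<in>F. tau_ball A x (r x))"
    by blast
qed

lemma tau_balls_disjoint_Ln_Pn:
  assumes r: "separating_radius A F G U r" and s: "separating_radius A G F V s"
    and x: "x \<in> F \<inter> Ln" and y: "y \<in> G \<inter> Pn"
  shows "tau_ball A x (r x) \<inter> tau_ball A y (s y) = {}"
proof -
  have "y \<notin> tau_ball A x (2 * r x)"
    using separating_radiusD(2)[OF r] x y by blast
  then have far: "snd y / 2 \<le> dist y z" if "z \<in> tau_ball A x (r x)" for z
    using x y separating_radiusD(1)[OF r] that by (intro half_snd_le_dist_tau_ball[of x]) auto
  have "4 * s y \<le> snd y" "tau_ball A y (s y) = ball y (s y)"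
    using separating_radiusD(4)[OF s] y by (auto simp: tau_ball_def)
  then have near: "dist y z < snd y / 2" if "z \<in> tau_ball A y (s y)" for z
    using that y by (auto simp: Pn_def)
  show ?thesis
  proof (rule equals0I)
    fix z assume "z \<in> tau_ball A x (r x) \<inter> tau_ball A y (s y)"
    then show False
      using far near by (meson IntD1 IntD2 not_less)
  qed
qed

lemma tau_balls_disjoint_Pn_Pn:
  assumes r: "separating_radius A F G U r" and s: "separating_radius A G F V s"
    and x: "x \<in> F \<inter> Pn" and y: "y \<in> G \<inter> Pn"
  shows "tau_ball A x (r x) \<inter> tau_ball A y (s y) = {}"
proof -
  have "tau_ball A x (2 * r x) \<inter> G = {}" "tau_ball A y (2 * s y) \<inter> F = {}"
    using separating_radiusD(2)[OF r] separating_radiusD(2)[OF s] x y by auto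
  then have "y \<notin> ball x (2 * r x)" "x \<notin> ball y (2 * s y)"
    using x y by (auto simp: tau_ball_def)
  then have "2 * r x \<le> dist x y" "2 * s y \<le> dist x y"
    by (auto simp: dist_commute)
  then have "z \<notin> ball x (r x) \<inter> ball y (s y)" for z
    using dist_triangle[of x y z] by (auto simp: dist_commute)
  then show ?thesis
    using x y by (auto simp: tau_ball_def)
qed

lemma tau_ball_Unions_disjoint:
  assumes r: "separating_radius A F G U r" and s: "separating_radius A G F V s"
    and UV: "disjnt U V" and F: "F \<subseteq> Xn" and G: "G \<subseteq> Xn"
  shows "disjnt (\<Union>x\<in>F. tau_ball A x (r x)) (\<Union>y\<in>G. tau_ball A y (s y))"
proof -
  have "tau_ball A x (r x) \<inter> tau_ball A y (s y) = {}" if x: "x \<in> F" and y: "y \<in> G" for x y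
  proof -
    consider "x \<in> Ln" "y \<in> Ln" | "x \<in> Ln" "y \<in> Pn" | "x \<in> Pn" "y \<in> Ln" | "x \<in> Pn" "y \<in> Pn"
      using x y F G Xn_eq_Pn_Un_Ln by blast
    then show ?thesis
    proof cases
      case 1
      have "tau_ball A x (r x) \<subseteq> tau_ball A x (2 * r x)" "tau_ball A y (s y) \<subseteq> tau_ball A y (2 * s y)"
        using separating_radiusD(1)[OF r x] separating_radiusD(1)[OF s y] by (simp_all add: tau_ball_mono)
      then have "tau_ball A x (r x) \<subseteq> U" "tau_ball A y (s y) \<subseteq> V"
        using separating_radiusD(3)[OF r x] separating_radiusD(3)[OF s y] 1 by auto
      then show ?thesis
        using UV by (auto simp: disjnt_def)
    next
      case 2
      then show ?thesis
        using x y by (intro tau_balls_disjoint_Ln_Pn[OF r s]) auto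
    next
      case 3
      then show ?thesis
        using x y tau_balls_disjoint_Ln_Pn[OF s r, of y x] by auto
    next
      case 4
      then show ?thesis
        using x y by (intro tau_balls_disjoint_Pn_Pn[OF r s]) auto
    qed
  qed
  then show ?thesis
    unfolding disjnt_def by blast
qed

lemma normal_space_tau_if_Ln_separated:
  assumes A: "A \<subseteq> Ln"
    and sep: "\<And>H K. \<lbrakk>closedin (tau A) H; closedin (tau A) K; H \<subseteq> Ln; K \<subseteq> Ln; disjnt H K\<rbrakk>
      \<Longrightarrow> \<exists>U V. openin (tau A) U \<and> openin (tau A) V \<and> H \<subseteq> U \<and> K \<subseteq> V \<and> disjnt U V"
  shows "normal_space (tau A)"
  unfolding normal_space_def
proof (intro allI impI, elim conjE)
  fix F G assume F: "closedin (tau A) F" and G: "closedin (tau A) G" and "disjnt F G"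
  have FG_Xn: "F \<subseteq> Xn" "G \<subseteq> Xn"
    using closedin_subset[OF F] closedin_subset[OF G] topspace_tau[OF A] by simp_all
  have FG_disj: "F \<inter> G = {}" "G \<inter> F = {}"
    using \<open>disjnt F G\<close> by (auto simp: disjnt_def)
  have "closedin (tau A) (F \<inter> Ln)" "closedin (tau A) (G \<inter> Ln)"
    using F G closedin_tau_Ln[OF A] by (simp_all add: closedin_Int)
  moreover have "disjnt (F \<inter> Ln) (G \<inter> Ln)"
    using \<open>disjnt F G\<close> by (auto simp: disjnt_def)
  ultimately obtain U V where UV: "openin (tau A) U" "openin (tau A) V" "F \<inter> Ln \<subseteq> U" "G \<inter> Ln \<subseteq> V"
      "disjnt U V"
    using sep[of "F \<inter> Ln" "G \<inter> Ln"] by blast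
  obtain r where r: "separating_radius A F G U r"
    using separating_radius_exists[OF A G UV(1) FG_Xn(1) UV(3) FG_disj(1)] by blast
  obtain s where s: "separating_radius A G F V s"
    using separating_radius_exists[OF A F UV(2) FG_Xn(2) UV(4) FG_disj(2)] by blast
  show "\<exists>U V. openin (tau A) U \<and> openin (tau A) V \<and> F \<subseteq> U \<and> G \<subseteq> V \<and> disjnt U V"
  proof (intro exI conjI)
    show "openin (tau A) (\<Union>x\<in>F. tau_ball A x (r x))" "openin (tau A) (\<Union>y\<in>G. tau_ball A y (s y))"
      using openin_tau_ball_Union[OF A FG_Xn(1) r] openin_tau_ball_Union[OF A FG_Xn(2) s] .
    show "F \<subseteq> (\<Union>x\<in>F. tau_ball A x (r x))" "G \<subseteq> (\<Union>y\<in>G. tau_ball A y (s y))"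
      using tau_ball_Union_cover[OF FG_Xn(1) r] tau_ball_Union_cover[OF FG_Xn(2) s] .
    show "disjnt (\<Union>x\<in>F. tau_ball A x (r x)) (\<Union>y\<in>G. tau_ball A y (s y))"
      by (rule tau_ball_Unions_disjoint[OF r s UV(5) FG_Xn])
  qed
qed

lemma normal_space_tau_if_z_embedded:
  assumes A: "A \<subseteq> Ln" and z: "z_embedded (tau A) Ln"
  shows "normal_space (tau A)"
proof (rule normal_space_tau_if_Ln_separated[OF A])
  fix H K assume H: "closedin (tau A) H" "H \<subseteq> Ln" and K: "closedin (tau A) K" "K \<subseteq> Ln"
    and "disjnt H K"
  then have "H \<inter> K = {}"
    by (simp add: disjnt_def)
  then obtain g where g: "continuous_map (subtopology (tau A) Ln) euclideanreal g"
    "\<And>p. p \<in> H \<Longrightarrow> g p < 0" "\<And>p. p \<in> K \<Longrightarrow> 0 < g p"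
    using sign_separating_function_Ln[OF A H(1) K(1)] by blast
  have HK: "H \<subseteq> topspace (tau A) \<inter> Ln" "K \<subseteq> topspace (tau A) \<inter> Ln"
    using H K topspace_tau[OF A] Ln_subset_Xn by auto
  obtain U V where "openin (tau A) U" "openin (tau A) V" "H \<subseteq> U" "K \<subseteq> V" "disjnt U V"
    using z_embedded_separation[OF z g(1) HK(1) g(2) HK(2) g(3)] by blast
  then show "\<exists>U V. openin (tau A) U \<and> openin (tau A) V \<and> H \<subseteq> U \<and> K \<subseteq> V \<and> disjnt U V"
    by blast
qed

theorem mainTheorem7:
  fixes A :: "((real^'m) \<times> real) set"
  assumes "A \<subseteq> Ln"
  shows "(normal_space (tau A) \<longleftrightarrow> C_star_embedded (tau A) Ln) \<and>
         (C_star_embedded (tau A) Ln \<longleftrightarrow> z_embedded (tau A) Ln)"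
proof -
  have "normal_space (tau A) \<Longrightarrow> C_star_embedded (tau A) Ln"
    by (rule C_star_embedded_if_closedin_normal_space[OF _ closedin_tau_Ln[OF assms]])
  moreover have "C_star_embedded (tau A) Ln \<Longrightarrow> z_embedded (tau A) Ln"
    by (rule z_embedded_if_C_star_embedded)
  moreover have "z_embedded (tau A) Ln \<Longrightarrow> normal_space (tau A)"
    by (rule normal_space_tau_if_z_embedded[OF assms])
  ultimately show ?thesis
    by blast
qed

end
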